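(* Let $t\in[0,1]$, assume $\rho_\theta(\cdot,t)$ dominates $\rho_\ast(\cdot,t)$, and let $F:\mathbb{R}^D\to\mathbb{R}$ be integrable with respect to $\rho_\ast(\cdot,t)$. Let $x_0^{(1)},x_0^{(2)},\dots$ be i.i.d. samples from $\mu$ and $$F_N(t):=\sum_{i=1}^N w_i(t)\,F\big(x(t;x_0^{(i)})\big),\qquad w_i(t):=\frac{\tilde w(t;x_0^{(i)})}{\sum_{j=1}^N\tilde w(t;x_0^{(j)})}.$$ Then $F_N(t)\to\mathbb{E}_{x'\sim\rho_\ast(\cdot,t)}[F(x')]$ in probability as $N\to\infty$. In particular (Corollary 1), if $\partial_t\log\tilde\rho_\ast(\cdot,t)$ is integrable with respect to $\rho_\ast(\cdot,t)$, then $\sum_{i=1}^N w_i(t)\,\partial_t\log\tilde\rho_\ast(x(t;x_0^{(i)}),t)\to\mathbb{E}_{x'\sim\rho_\ast(\cdot,t)}[\partial_t\log\tilde\rho_\ast(x',t)]$ in probability.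
   Context: Let $D\ge1$. Let $\tilde\rho_\ast:\mathbb{R}^D\times[0,1]\to(0,\infty)$ be a smooth unnormalized time-dependent density with $\mathcal{Z}(t):=\int\tilde\rho_\ast(x,t)\,dx<\infty$, $\rho_\ast(x,t):=\tilde\rho_\ast(x,t)/\mathcal{Z}(t)$, and with $\tilde\rho_\ast(\cdot,0)=\mu$ a normalized probability density. Score: $S_\ast(x,t):=\nabla_x\log\tilde\rho_\ast(x,t)$. Define $g(x,t):=\partial_t\log\tilde\rho_\ast(x,t)-\mathbb{E}_{x'\sim\rho_\ast(\cdot,t)}[\partial_t\log\tilde\rho_\ast(x',t)]$. Let $v_\theta:\mathbb{R}^D\times[0,1]\to\mathbb{R}^D$ be a smooth velocity field, globally Lipschitz in $x$. For $x_0\in\mathbb{R}^D$, let $x(t;x_0)$ denote the solution of $\dot x(t)=v_\theta(x(t),t)$, $x(0)=x_0$. Let $\rho_\theta(\cdot,t)$ be the solution of $\partial_t\rho_\theta=-\nabla_x\cdot(v_\theta\rho_\theta)$, $\rho_\theta(\cdot,0)=\mu$ (the density of $x(t;x_0)$ for $x_0\sim\mu$). Define $\varepsilon(x,t):=\nabla_x\cdot v_\theta(x,t)+S_\ast(x,t)\cdot v_\theta(x,t)+g(x,t)$ and $\tilde w(t;x_0):=\exp\!\big(\int_0^t\varepsilon(x(s;x_0),s)\,ds\big)$. "$\rho_\theta(\cdot,t)$ dominates $\rho_\ast(\cdot,t)$" means $\rho_\theta(x,t)>0$ whenever $\rho_\ast(x,t)>0$. *)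

theory Defs
  imports "HOL-Probability.Probability"
begin

text \<open>Iterated partial derivatives along basis directions, taken within the set S
  (S = R^D x [0,1] has nonempty interior and is convex, so these are unique).\<close>
fun iter_partial :: "'a::euclidean_space set \<Rightarrow> 'a list \<Rightarrow> ('a \<Rightarrow> 'b::real_normed_vector) \<Rightarrow> 'a \<Rightarrow> 'b" where
  "iter_partial S [] f = f"
| "iter_partial S (u # us) f = (\<lambda>x. frechet_derivative (iter_partial S us f) (at x within S) u)"

definition smooth_on :: "'a::euclidean_space set \<Rightarrow> ('a \<Rightarrow> 'b::real_normed_vector) \<Rightarrow> bool" where
  "smooth_on S f \<longleftrightarrow>
     (\<forall>us. set us \<subseteq> Basis \<longrightarrow> (\<forall>x\<in>S. iter_partial S us f differentiable (at x within S)))"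

definition grad :: "('a::euclidean_space \<Rightarrow> real) \<Rightarrow> 'a \<Rightarrow> 'a" where
  "grad f x = (\<Sum>b\<in>Basis. frechet_derivative f (at x) b *\<^sub>R b)"

definition divergence :: "('a::euclidean_space \<Rightarrow> 'a) \<Rightarrow> 'a \<Rightarrow> real" where
  "divergence F x = (\<Sum>b\<in>Basis. frechet_derivative F (at x) b \<bullet> b)"

definition partial_t :: "('a \<Rightarrow> real \<Rightarrow> real) \<Rightarrow> 'a \<Rightarrow> real \<Rightarrow> real" where
  "partial_t f x t = vector_derivative (\<lambda>s. f x s) (at t within {0..1})"

definition Zc :: "('a::euclidean_space \<Rightarrow> real \<Rightarrow> real) \<Rightarrow> real \<Rightarrow> real" where
  "Zc rho t = (\<integral>x. rho x t \<partial>lborel)"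

definition rho_star :: "('a::euclidean_space \<Rightarrow> real \<Rightarrow> real) \<Rightarrow> 'a \<Rightarrow> real \<Rightarrow> real" where
  "rho_star rho x t = rho x t / Zc rho t"

definition star_measure :: "('a::euclidean_space \<Rightarrow> real \<Rightarrow> real) \<Rightarrow> real \<Rightarrow> 'a measure" where
  "star_measure rho t = density lborel (\<lambda>x. ennreal (rho_star rho x t))"

definition score :: "('a::euclidean_space \<Rightarrow> real \<Rightarrow> real) \<Rightarrow> 'a \<Rightarrow> real \<Rightarrow> 'a" where
  "score rho x t = grad (\<lambda>y. ln (rho y t)) x"

definition gfun :: "('a::euclidean_space \<Rightarrow> real \<Rightarrow> real) \<Rightarrow> 'a \<Rightarrow> real \<Rightarrow> real" where
  "gfun rho x t = partial_t (\<lambda>y s. ln (rho y s)) x t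
      - (\<integral>y. partial_t (\<lambda>y s. ln (rho y s)) y t \<partial>star_measure rho t)"

definition epsf :: "('a::euclidean_space \<Rightarrow> real \<Rightarrow> real) \<Rightarrow> ('a \<Rightarrow> real \<Rightarrow> 'a) \<Rightarrow> 'a \<Rightarrow> real \<Rightarrow> real" where
  "epsf rho v x t = divergence (\<lambda>y. v y t) x + score rho x t \<bullet> v x t + gfun rho x t"

text \<open>Unnormalised weight w_tilde(t;x0) = exp(int_0^t epsilon(x(s;x0),s) ds),
  where X x0 s is the flow x(s;x0).\<close>
definition wtilde :: "('a::euclidean_space \<Rightarrow> real \<Rightarrow> real) \<Rightarrow> ('a \<Rightarrow> real \<Rightarrow> 'a)
      \<Rightarrow> ('a \<Rightarrow> real \<Rightarrow> 'a) \<Rightarrow> real \<Rightarrow> 'a \<Rightarrow> real" where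
  "wtilde rho v X t x0 = exp (integral {0..t} (\<lambda>s. epsf rho v (X x0 s) s))"

definition estimator :: "('a::euclidean_space \<Rightarrow> real \<Rightarrow> real) \<Rightarrow> ('a \<Rightarrow> real \<Rightarrow> 'a)
      \<Rightarrow> ('a \<Rightarrow> real \<Rightarrow> 'a) \<Rightarrow> real \<Rightarrow> ('a \<Rightarrow> real) \<Rightarrow> (nat \<Rightarrow> 'a) \<Rightarrow> nat \<Rightarrow> real" where
  "estimator rho v X t F xs N =
     (\<Sum>i<N. (wtilde rho v X t (xs i) / (\<Sum>j<N. wtilde rho v X t (xs j))) * F (X (xs i) t))"

definition conv_in_prob :: "'w measure \<Rightarrow> (nat \<Rightarrow> 'w \<Rightarrow> real) \<Rightarrow> real \<Rightarrow> bool" where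
  "conv_in_prob M Y c \<longleftrightarrow>
     (\<forall>n. Y n \<in> borel_measurable M) \<and>
     (\<forall>e>0. (\<lambda>n. measure M {\<omega>\<in>space M. \<bar>Y n \<omega> - c\<bar> > e}) \<longlonglongrightarrow> 0)"

end

theory Submission
  imports Defs
begin

text \<open>Along a trajectory \<open>\<gamma>\<close> of the flow, the continuity equation turns into
  \<open>d/ds log \<rho>\<^sub>\<theta>(\<gamma> s, s) = - div v\<close>, while
  \<open>d/ds log \<rho>\<^sub>*(\<gamma> s, s) = S\<^sub>* \<cdot> v + \<partial>\<^sub>t log \<rho>\<^sub>*\<close>. Hence the logarithm of \<open>\<rho>\<^sub>*/\<rho>\<^sub>\<theta>\<close> along the
  trajectory has derivative \<open>\<epsilon>\<close> plus a term depending on time only, so the unnormalised weight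
  \<open>w(t; x\<^sub>0)\<close> equals \<open>C \<rho>\<^sub>*(X, t) / \<rho>\<^sub>\<theta>(X, t)\<close> at \<open>X = x(t; x\<^sub>0)\<close>, with a constant \<open>C > 0\<close>.
  The estimator is therefore self-normalised importance sampling of \<open>\<rho>\<^sub>*\<close> with i.i.d. proposals
  \<open>X\<^sub>i \<sim> \<rho>\<^sub>\<theta>\<close>: numerator and denominator are empirical means which converge in probability
  by the weak law of large numbers, and so does their quotient.\<close>

section \<open>Convergence in probability\<close>

definition clip :: "real \<Rightarrow> real \<Rightarrow> real" where
  "clip K x = max (-K) (min K x)"

lemma borel_measurable_clip [measurable]: "clip K \<in> borel_measurable borel"
  unfolding clip_def by measurable

lemma abs_clip_le: "K \<ge> 0 \<Longrightarrow> \<bar>clip K x\<bar> \<le> K"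
  unfolding clip_def by auto

lemma abs_diff_clip_le: "K \<ge> 0 \<Longrightarrow> \<bar>x - clip K x\<bar> \<le> \<bar>x\<bar>"
  unfolding clip_def by auto

lemma distr_comp_eq:
  assumes [measurable]: "X \<in> measurable M N" "Y \<in> measurable M N" "g \<in> measurable N L"
    and eq: "distr M N X = distr M N Y"
  shows "distr M L (\<lambda>\<omega>. g (X \<omega>)) = distr M L (\<lambda>\<omega>. g (Y \<omega>))"
proof -
  have "distr M L (\<lambda>\<omega>. g (X \<omega>)) = distr (distr M N X) L g"
    by (subst distr_distr) (auto simp: comp_def)
  also have "\<dots> = distr M L (\<lambda>\<omega>. g (Y \<omega>))"
    unfolding eq by (subst distr_distr) (auto simp: comp_def)
  finally show ?thesis .
qed

lemma (in prob_space) integral_eq_if_distr_eq: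
  fixes X Y :: "'a \<Rightarrow> real" and g :: "real \<Rightarrow> real"
  assumes [measurable]: "X \<in> borel_measurable M" "Y \<in> borel_measurable M" "g \<in> borel_measurable borel"
    and eq: "distr M borel X = distr M borel Y"
    and int: "integrable M (\<lambda>\<omega>. g (Y \<omega>))"
  shows "integrable M (\<lambda>\<omega>. g (X \<omega>))" "(\<integral>\<omega>. g (X \<omega>) \<partial>M) = (\<integral>\<omega>. g (Y \<omega>) \<partial>M)"
proof -
  have "integrable (distr M borel Y) g"
    using int by (simp add: integrable_distr_eq)
  then show "integrable M (\<lambda>\<omega>. g (X \<omega>))"
    by (simp add: integrable_distr_eq flip: eq)
  have "(\<integral>\<omega>. g (X \<omega>) \<partial>M) = (\<integral>x. g x \<partial>distr M borel X)"
    by (simp add: integral_distr)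
  also have "\<dots> = (\<integral>\<omega>. g (Y \<omega>) \<partial>M)"
    unfolding eq by (simp add: integral_distr)
  finally show "(\<integral>\<omega>. g (X \<omega>) \<partial>M) = (\<integral>\<omega>. g (Y \<omega>) \<partial>M)" .
qed

lemma (in prob_space) integral_abs_diff_clip_tendsto_0:
  fixes Y :: "'a \<Rightarrow> real"
  assumes int: "integrable M Y"
  shows "(\<lambda>n. \<integral>\<omega>. \<bar>Y \<omega> - clip (real n) (Y \<omega>)\<bar> \<partial>M) \<longlonglongrightarrow> 0"
proof -
  have [measurable]: "Y \<in> borel_measurable M" using int by auto
  have "(\<lambda>n. \<integral>\<omega>. \<bar>Y \<omega> - clip (real n) (Y \<omega>)\<bar> \<partial>M) \<longlonglongrightarrow> (\<integral>\<omega>. 0 \<partial>M)"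
  proof (rule integral_dominated_convergence[where w = "\<lambda>\<omega>. \<bar>Y \<omega>\<bar>"])
    show "AE \<omega> in M. (\<lambda>n. \<bar>Y \<omega> - clip (real n) (Y \<omega>)\<bar>) \<longlonglongrightarrow> 0"
    proof (rule AE_I2)
      fix \<omega>
      obtain N :: nat where N: "\<bar>Y \<omega>\<bar> \<le> real N" using real_arch_simple by blast
      have "eventually (\<lambda>n. \<bar>Y \<omega> - clip (real n) (Y \<omega>)\<bar> = 0) sequentially"
        using eventually_ge_at_top[of N] by eventually_elim (use N in \<open>auto simp: clip_def\<close>)
      then show "(\<lambda>n. \<bar>Y \<omega> - clip (real n) (Y \<omega>)\<bar>) \<longlonglongrightarrow> 0"
        by (rule tendsto_eventually)
    qed
    show "integrable M (\<lambda>\<omega>. \<bar>Y \<omega>\<bar>)"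
      using int by auto
    show "AE \<omega> in M. norm \<bar>Y \<omega> - clip (real n) (Y \<omega>)\<bar> \<le> \<bar>Y \<omega>\<bar>" for n
      by (auto intro!: abs_diff_clip_le)
  qed measurable
  then show ?thesis by simp
qed

lemma (in prob_space) prob_mean_abs_ge_le:
  fixes R :: "nat \<Rightarrow> 'a \<Rightarrow> real"
  assumes [measurable]: "\<And>i. R i \<in> borel_measurable M"
    and ident: "\<And>i. distr M borel (R i) = distr M borel (R 0)"
    and int: "integrable M (R 0)"
    and c: "c > 0"
  shows "prob {\<omega>\<in>space M. (\<Sum>i<n. \<bar>R i \<omega>\<bar>) / real n \<ge> c} \<le> expectation (\<lambda>\<omega>. \<bar>R 0 \<omega>\<bar>) / c"
proof -
  have int_abs: "integrable M (\<lambda>\<omega>. \<bar>R i \<omega>\<bar>)"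
    and E_abs: "expectation (\<lambda>\<omega>. \<bar>R i \<omega>\<bar>) = expectation (\<lambda>\<omega>. \<bar>R 0 \<omega>\<bar>)" for i
    using integral_eq_if_distr_eq[of "R i" "R 0" abs, OF _ _ _ ident] int by auto
  have int_mean: "integrable M (\<lambda>\<omega>. (\<Sum>i<n. \<bar>R i \<omega>\<bar>) / real n)"
    using int_abs by auto
  have mean: "expectation (\<lambda>\<omega>. (\<Sum>i<n. \<bar>R i \<omega>\<bar>) / real n) \<le> expectation (\<lambda>\<omega>. \<bar>R 0 \<omega>\<bar>)"
  proof (cases "n = 0")
    case False
    have "expectation (\<lambda>\<omega>. (\<Sum>i<n. \<bar>R i \<omega>\<bar>) / real n) = (\<Sum>i<n. expectation (\<lambda>\<omega>. \<bar>R i \<omega>\<bar>)) / real n"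
      using int_abs by (simp add: Bochner_Integration.integral_sum)
    also have "(\<Sum>i<n. expectation (\<lambda>\<omega>. \<bar>R i \<omega>\<bar>)) = (\<Sum>i<n. expectation (\<lambda>\<omega>. \<bar>R 0 \<omega>\<bar>))"
      by (rule sum.cong[OF refl E_abs])
    also have "\<dots> / real n = expectation (\<lambda>\<omega>. \<bar>R 0 \<omega>\<bar>)"
      using False by simp
    finally show ?thesis by simp
  qed (simp add: integral_nonneg_AE)
  have "prob {\<omega>\<in>space M. (\<Sum>i<n. \<bar>R i \<omega>\<bar>) / real n \<ge> c}
      \<le> expectation (\<lambda>\<omega>. (\<Sum>i<n. \<bar>R i \<omega>\<bar>) / real n) / c"
    by (rule integral_Markov_inequality_measure[OF int_mean, where A = "space M"]) (use c in auto)
  also have "\<dots> \<le> expectation (\<lambda>\<omega>. \<bar>R 0 \<omega>\<bar>) / c"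
    using mean c by (intro divide_right_mono) auto
  finally show ?thesis .
qed

lemma (in prob_space) bounded_iid_mean_deviation_tendsto_0:
  fixes T :: "nat \<Rightarrow> 'a \<Rightarrow> real"
  assumes indep: "indep_vars (\<lambda>_. borel) T UNIV"
    and ident: "\<And>i. distr M borel (T i) = distr M borel (T 0)"
    and bound: "\<And>i \<omega>. \<omega> \<in> space M \<Longrightarrow> \<bar>T i \<omega>\<bar> \<le> K"
    and K: "K > 0" and e: "e > 0"
  shows "(\<lambda>n. prob {\<omega>\<in>space M. \<bar>(\<Sum>i<n. T i \<omega>) / real n - expectation (T 0)\<bar> \<ge> e}) \<longlonglongrightarrow> 0"
proof (rule tendsto_sandwich[where f = "\<lambda>_. 0"])
  have [measurable]: "T i \<in> borel_measurable M" for i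
    using indep unfolding indep_vars_def by auto
  define q where "q = exp (- 2 * (e\<^sup>2 / (K - (-K))\<^sup>2))"
  have hoeffding: "prob {\<omega>\<in>space M. \<bar>(\<Sum>i<n. T i \<omega>) / real n - expectation (T 0)\<bar> \<ge> e} \<le> 2 * q ^ n"
    if n: "n > 0" for n
  proof -
    interpret H: Hoeffding_ineq_iid M "{..<n}" T "T 0" "-K" K "expectation (T 0)"
    proof unfold_locales
      show "indep_vars (\<lambda>_. borel) T {..<n}"
        by (rule indep_vars_subset[OF indep]) auto
      show "AE \<omega> in M. T 0 \<omega> \<in> {-K..K}"
      proof (rule AE_I2)
        show "T 0 \<omega> \<in> {-K..K}" if "\<omega> \<in> space M" for \<omega>
          using bound[OF that, of 0] by (simp add: abs_le_iff)
      qed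
    qed (auto intro: ident)
    have "prob {\<omega>\<in>space M. \<bar>(\<Sum>i\<in>{..<n}. T i \<omega>) / real (card {..<n}) - expectation (T 0)\<bar> \<ge> e}
        \<le> 2 * exp (-2 * real (card {..<n}) * e\<^sup>2 / (K - (-K))\<^sup>2)"
      by (rule H.Hoeffding_ineq_abs_ge') (use e K n in auto)
    also have "exp (-2 * real (card {..<n}) * e\<^sup>2 / (K - (-K))\<^sup>2) = q ^ n"
      unfolding q_def card_lessThan by (simp add: exp_of_nat_mult[symmetric] mult_ac)
    finally show ?thesis by simp
  qed
  show "eventually (\<lambda>n. prob {\<omega>\<in>space M. \<bar>(\<Sum>i<n. T i \<omega>) / real n - expectation (T 0)\<bar> \<ge> e} \<le> 2 * q ^ n)
      sequentially"
    using eventually_gt_at_top[of 0] by eventually_elim (rule hoeffding)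
  have "q < 1"
    using e K by (simp add: q_def)
  then show "(\<lambda>n. 2 * q ^ n) \<longlonglongrightarrow> 0"
    using LIMSEQ_power_zero[of q] tendsto_mult_right_zero[of _ sequentially 2]
    by (simp add: q_def)
qed simp_all

lemma (in finite_measure) measure_le_add_if_subset_Un:
  assumes "S \<subseteq> A \<union> B" "A \<in> sets M" "B \<in> sets M"
  shows "measure M S \<le> measure M A + measure M B"
proof -
  have "measure M S \<le> measure M (A \<union> B)"
    using assms by (intro finite_measure_mono) auto
  also have "\<dots> \<le> measure M A + measure M B"
    using assms by (intro measure_subadditive) auto
  finally show ?thesis .
qed

lemma (in prob_space) prob_mean_deviation_split:
  fixes T R :: "nat \<Rightarrow> 'a \<Rightarrow> real"
  assumes [measurable]: "\<And>i. T i \<in> borel_measurable M" "\<And>i. R i \<in> borel_measurable M"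
    and c: "\<bar>c\<bar> < e / 4"
  shows "prob {\<omega>\<in>space M. \<bar>(\<Sum>i<n. T i \<omega> + R i \<omega>) / real n - (b + c)\<bar> > e}
    \<le> prob {\<omega>\<in>space M. \<bar>(\<Sum>i<n. T i \<omega>) / real n - b\<bar> \<ge> e / 2}
      + prob {\<omega>\<in>space M. (\<Sum>i<n. \<bar>R i \<omega>\<bar>) / real n \<ge> e / 4}"
proof (rule measure_le_add_if_subset_Un)
  have abs_R: "\<bar>(\<Sum>i<n. R i \<omega>) / real n\<bar> \<le> (\<Sum>i<n. \<bar>R i \<omega>\<bar>) / real n" for \<omega>
    unfolding abs_divide by (simp add: divide_right_mono sum_abs)
  have split: "(\<Sum>i<n. T i \<omega> + R i \<omega>) / real n - (b + c)
      = ((\<Sum>i<n. T i \<omega>) / real n - b) + (\<Sum>i<n. R i \<omega>) / real n - c" for \<omega>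
    by (simp add: sum.distrib add_divide_distrib)
  show "{\<omega>\<in>space M. \<bar>(\<Sum>i<n. T i \<omega> + R i \<omega>) / real n - (b + c)\<bar> > e}
    \<subseteq> {\<omega>\<in>space M. \<bar>(\<Sum>i<n. T i \<omega>) / real n - b\<bar> \<ge> e / 2}
      \<union> {\<omega>\<in>space M. (\<Sum>i<n. \<bar>R i \<omega>\<bar>) / real n \<ge> e / 4}"
  proof (rule subsetI, rule ccontr)
    fix \<omega> assume "\<omega> \<in> {\<omega>\<in>space M. \<bar>(\<Sum>i<n. T i \<omega> + R i \<omega>) / real n - (b + c)\<bar> > e}"
      and "\<omega> \<notin> {\<omega>\<in>space M. \<bar>(\<Sum>i<n. T i \<omega>) / real n - b\<bar> \<ge> e / 2}
        \<union> {\<omega>\<in>space M. (\<Sum>i<n. \<bar>R i \<omega>\<bar>) / real n \<ge> e / 4}"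
    then have "\<bar>(\<Sum>i<n. T i \<omega> + R i \<omega>) / real n - (b + c)\<bar> > e"
      "\<bar>(\<Sum>i<n. T i \<omega>) / real n - b\<bar> < e / 2" "(\<Sum>i<n. \<bar>R i \<omega>\<bar>) / real n < e / 4"
      by auto
    with abs_R[of \<omega>] split[of \<omega>] c show False
      by linarith
  qed
qed measurable

text \<open>Truncation: the clipped variables obey Hoeffding's inequality, and the remainders have small
  mean modulus, so Markov's inequality controls them.\<close>
lemma (in prob_space) mean_deviation_eventually_small:
  fixes Z :: "nat \<Rightarrow> 'a \<Rightarrow> real"
  assumes indep: "indep_vars (\<lambda>_. borel) Z UNIV"
    and ident: "\<And>i. distr M borel (Z i) = distr M borel (Z 0)"
    and int: "integrable M (Z 0)"
    and e: "e > 0" and \<eta>: "\<eta> > 0"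
  shows "eventually (\<lambda>n. prob {\<omega>\<in>space M. \<bar>(\<Sum>i<n. Z i \<omega>) / real n - expectation (Z 0)\<bar> > e} < \<eta>)
           sequentially"
proof -
  have [measurable]: "Z i \<in> borel_measurable M" for i
    using indep unfolding indep_vars_def by auto
  define c where "c = min (e / 4) (\<eta> * e / 8)"
  have "eventually (\<lambda>n. (\<integral>\<omega>. \<bar>Z 0 \<omega> - clip (real n) (Z 0 \<omega>)\<bar> \<partial>M) < c) sequentially"
    using e \<eta> by (intro order_tendstoD(2)[OF integral_abs_diff_clip_tendsto_0[OF int]]) (simp add: c_def)
  then obtain K :: nat where K: "K \<ge> 1" "(\<integral>\<omega>. \<bar>Z 0 \<omega> - clip K (Z 0 \<omega>)\<bar> \<partial>M) < c"
    by (metis (no_types, lifting) eventually_sequentially max.cobounded1 max.cobounded2)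
  define T where "T i \<omega> = clip K (Z i \<omega>)" for i \<omega>
  define R where "R i \<omega> = Z i \<omega> - T i \<omega>" for i \<omega>
  have [measurable]: "T i \<in> borel_measurable M" "R i \<in> borel_measurable M" for i
    unfolding T_def R_def by measurable
  have int_T: "integrable M (T 0)"
  proof (rule Bochner_Integration.integrable_bound)
    show "AE \<omega> in M. norm (T 0 \<omega>) \<le> norm (real K)"
      by (simp add: T_def abs_clip_le)
  qed measurable
  have int_R: "integrable M (R 0)"
    unfolding R_def using int int_T by auto
  have E_abs_R: "expectation (\<lambda>\<omega>. \<bar>R 0 \<omega>\<bar>) < c"
    using K by (simp add: R_def T_def)
  have E_R: "\<bar>expectation (R 0)\<bar> < e / 4"
  proof -
    have "\<bar>expectation (R 0)\<bar> \<le> expectation (\<lambda>\<omega>. \<bar>R 0 \<omega>\<bar>)"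
      by (rule integral_abs_bound)
    moreover have "c \<le> e / 4" by (simp add: c_def)
    ultimately show ?thesis using E_abs_R by linarith
  qed
  have E_Z: "expectation (Z 0) = expectation (T 0) + expectation (R 0)"
    using int_T int_R by (subst Bochner_Integration.integral_add[symmetric]) (auto simp: R_def)
  have markov: "prob {\<omega>\<in>space M. (\<Sum>i<n. \<bar>R i \<omega>\<bar>) / real n \<ge> e / 4} < \<eta> / 2" for n
  proof -
    have ident_R: "distr M borel (R i) = distr M borel (R 0)" for i
      unfolding R_def T_def by (rule distr_comp_eq[OF _ _ _ ident[of i]]) auto
    have "prob {\<omega>\<in>space M. (\<Sum>i<n. \<bar>R i \<omega>\<bar>) / real n \<ge> e / 4} \<le> expectation (\<lambda>\<omega>. \<bar>R 0 \<omega>\<bar>) / (e / 4)"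
      by (rule prob_mean_abs_ge_le[where R = R, OF _ ident_R int_R]) (use e in auto)
    also have "\<dots> < \<eta> / 2"
      using E_abs_R e by (simp add: c_def field_simps)
    finally show ?thesis .
  qed
  have ident_T: "distr M borel (T i) = distr M borel (T 0)" for i
    unfolding T_def by (rule distr_comp_eq[OF _ _ _ ident]) auto
  have indep_T: "indep_vars (\<lambda>_. borel) T UNIV"
    unfolding T_def by (rule indep_vars_compose2[OF indep]) auto
  have "(\<lambda>n. prob {\<omega>\<in>space M. \<bar>(\<Sum>i<n. T i \<omega>) / real n - expectation (T 0)\<bar> \<ge> e / 2}) \<longlonglongrightarrow> 0"
    by (rule bounded_iid_mean_deviation_tendsto_0[OF indep_T ident_T, of "real K"])
      (use K e in \<open>auto simp: T_def abs_clip_le\<close>)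
  then have "eventually (\<lambda>n. prob {\<omega>\<in>space M. \<bar>(\<Sum>i<n. T i \<omega>) / real n - expectation (T 0)\<bar> \<ge> e / 2}
      < \<eta> / 2) sequentially"
    by (rule order_tendstoD(2)) (use \<eta> in simp)
  then show ?thesis
  proof eventually_elim
    case (elim n)
    have "Z i \<omega> = T i \<omega> + R i \<omega>" for i \<omega>
      by (simp add: R_def)
    then show ?case
      using prob_mean_deviation_split[of T R "expectation (R 0)" e n "expectation (T 0)"] E_R E_Z
        elim markov[of n] by simp
  qed
qed

lemma (in prob_space) weak_law_of_large_numbers:
  fixes Z :: "nat \<Rightarrow> 'a \<Rightarrow> real"
  assumes indep: "indep_vars (\<lambda>_. borel) Z UNIV"
    and ident: "\<And>i. distr M borel (Z i) = distr M borel (Z 0)"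
    and int: "integrable M (Z 0)"
  shows "conv_in_prob M (\<lambda>n \<omega>. (\<Sum>i<n. Z i \<omega>) / real n) (expectation (Z 0))"
  unfolding conv_in_prob_def
proof (intro conjI allI impI)
  have [measurable]: "Z i \<in> borel_measurable M" for i
    using indep unfolding indep_vars_def by auto
  show "(\<lambda>\<omega>. (\<Sum>i<n. Z i \<omega>) / real n) \<in> borel_measurable M" for n
    by measurable
  show "(\<lambda>n. measure M {\<omega>\<in>space M. \<bar>(\<Sum>i<n. Z i \<omega>) / real n - expectation (Z 0)\<bar> > e}) \<longlonglongrightarrow> 0"
    if "e > 0" for e
  proof (rule order_tendstoI)
    show "eventually (\<lambda>n. measure M {\<omega>\<in>space M. \<bar>(\<Sum>i<n. Z i \<omega>) / real n - expectation (Z 0)\<bar> > e} < \<eta>)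
        sequentially" if "\<eta> > 0" for \<eta>
      by (rule mean_deviation_eventually_small[OF indep ident int \<open>e > 0\<close> that])
    show "eventually (\<lambda>n. a < measure M {\<omega>\<in>space M. \<bar>(\<Sum>i<n. Z i \<omega>) / real n - expectation (Z 0)\<bar> > e})
        sequentially" if "a < 0" for a
      by (intro always_eventually allI less_le_trans[OF that measure_nonneg])
  qed
qed

lemma continuous_at_Pair_eps_delta:
  fixes f :: "real \<Rightarrow> real \<Rightarrow> real"
  assumes "isCont (\<lambda>z. f (fst z) (snd z)) (a, b)" and "e > 0"
  obtains \<delta> where "\<delta> > 0" "\<And>x y. \<bar>x - a\<bar> \<le> \<delta> \<Longrightarrow> \<bar>y - b\<bar> \<le> \<delta> \<Longrightarrow> \<bar>f x y - f a b\<bar> < e"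
proof -
  obtain d where d: "d > 0" and close: "\<And>z. dist z (a, b) < d \<Longrightarrow> dist (f (fst z) (snd z)) (f a b) < e"
    using assms unfolding continuous_at_eps_delta by (metis fst_conv snd_conv)
  have near: "\<bar>f x y - f a b\<bar> < e" if "\<bar>x - a\<bar> \<le> d / 3" "\<bar>y - b\<bar> \<le> d / 3" for x y
  proof -
    have "dist (x, y) (a, b) \<le> \<bar>x - a\<bar> + \<bar>y - b\<bar>"
      using norm_Pair_le[of "x - a" "y - b"] by (simp add: dist_norm)
    then show ?thesis
      using close[of "(x, y)"] that d by (simp add: dist_real_def)
  qed
  show ?thesis
    by (rule that[of "d / 3"]) (use d near in auto)
qed

lemma (in finite_measure) conv_in_prob_continuous_map2:
  fixes A B :: "nat \<Rightarrow> 'a \<Rightarrow> real" and f :: "real \<Rightarrow> real \<Rightarrow> real"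
  assumes A: "conv_in_prob M A a" and B: "conv_in_prob M B b"
    and f_meas: "(\<lambda>z. f (fst z) (snd z)) \<in> borel_measurable borel"
    and f_cont: "isCont (\<lambda>z. f (fst z) (snd z)) (a, b)"
  shows "conv_in_prob M (\<lambda>n \<omega>. f (A n \<omega>) (B n \<omega>)) (f a b)"
  unfolding conv_in_prob_def
proof (intro conjI allI impI)
  have [measurable]: "A n \<in> borel_measurable M" "B n \<in> borel_measurable M" for n
    using A B by (auto simp: conv_in_prob_def)
  have f_prod: "(\<lambda>z. f (fst z) (snd z)) \<in> borel_measurable (borel \<Otimes>\<^sub>M borel)"
    using f_meas by (simp add: borel_prod)
  show "(\<lambda>\<omega>. f (A n \<omega>) (B n \<omega>)) \<in> borel_measurable M" for n
    using measurable_compose[OF measurable_Pair[of "A n" M borel "B n" borel] f_prod] by simp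
  fix e :: real assume "e > 0"
  with f_cont obtain \<delta> where \<delta>: "\<delta> > 0"
    and near: "\<And>x y. \<bar>x - a\<bar> \<le> \<delta> \<Longrightarrow> \<bar>y - b\<bar> \<le> \<delta> \<Longrightarrow> \<bar>f x y - f a b\<bar> < e"
    by (rule continuous_at_Pair_eps_delta) auto
  have bound: "measure M {\<omega>\<in>space M. \<bar>f (A n \<omega>) (B n \<omega>) - f a b\<bar> > e}
      \<le> measure M {\<omega>\<in>space M. \<bar>A n \<omega> - a\<bar> > \<delta>} + measure M {\<omega>\<in>space M. \<bar>B n \<omega> - b\<bar> > \<delta>}" for n
  proof (rule measure_le_add_if_subset_Un)
    show "{\<omega>\<in>space M. \<bar>f (A n \<omega>) (B n \<omega>) - f a b\<bar> > e}
        \<subseteq> {\<omega>\<in>space M. \<bar>A n \<omega> - a\<bar> > \<delta>} \<union> {\<omega>\<in>space M. \<bar>B n \<omega> - b\<bar> > \<delta>}"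
    proof (rule subsetI, rule ccontr)
      fix \<omega> assume "\<omega> \<in> {\<omega>\<in>space M. \<bar>f (A n \<omega>) (B n \<omega>) - f a b\<bar> > e}"
        and "\<omega> \<notin> {\<omega>\<in>space M. \<bar>A n \<omega> - a\<bar> > \<delta>} \<union> {\<omega>\<in>space M. \<bar>B n \<omega> - b\<bar> > \<delta>}"
      then show False
        using near[of "A n \<omega>" "B n \<omega>"] by auto
    qed
  qed measurable
  have "(\<lambda>n. measure M {\<omega>\<in>space M. \<bar>A n \<omega> - a\<bar> > \<delta>}) \<longlonglongrightarrow> 0"
    and "(\<lambda>n. measure M {\<omega>\<in>space M. \<bar>B n \<omega> - b\<bar> > \<delta>}) \<longlonglongrightarrow> 0"
    using A B \<delta> unfolding conv_in_prob_def by auto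
  from tendsto_add[OF this] have lim:
    "(\<lambda>n. measure M {\<omega>\<in>space M. \<bar>A n \<omega> - a\<bar> > \<delta>} + measure M {\<omega>\<in>space M. \<bar>B n \<omega> - b\<bar> > \<delta>})
      \<longlonglongrightarrow> 0"
    by simp
  show "(\<lambda>n. measure M {\<omega>\<in>space M. \<bar>f (A n \<omega>) (B n \<omega>) - f a b\<bar> > e}) \<longlonglongrightarrow> 0"
    by (rule tendsto_sandwich[OF always_eventually always_eventually tendsto_const lim])
      (simp_all add: bound)
qed

section \<open>Self-normalised importance sampling\<close>

lemma distributed_comp:
  fixes X :: "'w \<Rightarrow> 'a::euclidean_space" and T :: "'a \<Rightarrow> 'b::euclidean_space"
  assumes X: "distributed M lborel X (\<lambda>x. ennreal (f x))"
    and T: "T \<in> borel_measurable borel" and g: "g \<in> borel_measurable borel"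
    and push: "distr (density lborel (\<lambda>x. ennreal (f x))) lborel T = density lborel (\<lambda>y. ennreal (g y))"
  shows "distributed M lborel (\<lambda>\<omega>. T (X \<omega>)) (\<lambda>y. ennreal (g y))"
proof -
  have [measurable]: "X \<in> borel_measurable M" "T \<in> borel_measurable lborel"
    using distributed_measurable[OF X] T by simp_all
  have "distr M lborel (\<lambda>\<omega>. T (X \<omega>)) = distr (distr M lborel X) lborel T"
    by (subst distr_distr) (auto simp: comp_def)
  also have "\<dots> = density lborel (\<lambda>y. ennreal (g y))"
    using push distributed_distr_eq_density[OF X] by simp
  finally show ?thesis
    unfolding distributed_def using g by simp
qed

lemma (in prob_space) empirical_mean_conv_in_prob:
  fixes Y :: "nat \<Rightarrow> 'a \<Rightarrow> 'b::euclidean_space" and q h :: "'b \<Rightarrow> real"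
  assumes indep: "indep_vars (\<lambda>_. borel) Y UNIV"
    and Y: "\<And>i. distributed M lborel (Y i) (\<lambda>y. ennreal (q y))"
    and q_nonneg: "\<And>y. q y \<ge> 0"
    and h: "h \<in> borel_measurable borel"
    and int: "integrable lborel (\<lambda>y. q y * h y)"
  shows "conv_in_prob M (\<lambda>n \<omega>. (\<Sum>i<n. h (Y i \<omega>)) / real n) (\<integral>y. q y * h y \<partial>lborel)"
proof -
  have [measurable]: "Y i \<in> borel_measurable M" "h \<in> borel_measurable lborel" for i
    using distributed_measurable[OF Y] h by simp_all
  have "indep_vars (\<lambda>_. borel) (\<lambda>i \<omega>. h (Y i \<omega>)) UNIV"
    by (rule indep_vars_compose2[where Y = "\<lambda>_. h" and N = "\<lambda>_. borel", OF indep]) (simp add: h)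
  moreover have "distr M borel (\<lambda>\<omega>. h (Y i \<omega>)) = distr M borel (\<lambda>\<omega>. h (Y 0 \<omega>))" for i
  proof (rule distr_comp_eq[OF distributed_measurable[OF Y] distributed_measurable[OF Y]])
    show "distr M lborel (Y i) = distr M lborel (Y 0)"
      by (simp only: distributed_distr_eq_density[OF Y])
  qed simp
  moreover have "integrable M (\<lambda>\<omega>. h (Y 0 \<omega>))"
    using distributed_integrable[OF Y[of 0], of h] int q_nonneg by simp
  ultimately have "conv_in_prob M (\<lambda>n \<omega>. (\<Sum>i<n. h (Y i \<omega>)) / real n) (expectation (\<lambda>\<omega>. h (Y 0 \<omega>)))"
    by (rule weak_law_of_large_numbers)
  moreover have "expectation (\<lambda>\<omega>. h (Y 0 \<omega>)) = (\<integral>y. q y * h y \<partial>lborel)"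
    using distributed_integral[OF Y[of 0], of h] q_nonneg by simp
  ultimately show ?thesis by simp
qed

lemma (in prob_space) self_normalised_importance_sampling:
  fixes Y :: "nat \<Rightarrow> 'a \<Rightarrow> 'b::euclidean_space" and q w G :: "'b \<Rightarrow> real"
  assumes indep: "indep_vars (\<lambda>_. borel) Y UNIV"
    and Y: "\<And>i. distributed M lborel (Y i) (\<lambda>y. ennreal (q y))"
    and q_nonneg: "\<And>y. q y \<ge> 0"
    and [measurable]: "w \<in> borel_measurable borel" "G \<in> borel_measurable borel"
    and int_w: "integrable lborel (\<lambda>y. q y * w y)"
    and int_wG: "integrable lborel (\<lambda>y. q y * (w y * G y))"
    and nonzero: "(\<integral>y. q y * w y \<partial>lborel) \<noteq> 0"
  shows "conv_in_prob M (\<lambda>n \<omega>. \<Sum>i<n. (w (Y i \<omega>) / (\<Sum>j<n. w (Y j \<omega>))) * G (Y i \<omega>))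
           ((\<integral>y. q y * (w y * G y) \<partial>lborel) / (\<integral>y. q y * w y \<partial>lborel))"
proof -
  define A where "A n \<omega> = (\<Sum>i<n. w (Y i \<omega>) * G (Y i \<omega>)) / real n" for n \<omega>
  define B where "B n \<omega> = (\<Sum>i<n. w (Y i \<omega>)) / real n" for n \<omega>
  have "conv_in_prob M A (\<integral>y. q y * (w y * G y) \<partial>lborel)"
    unfolding A_def by (rule empirical_mean_conv_in_prob[OF indep Y q_nonneg _ int_wG]) simp
  moreover have "conv_in_prob M B (\<integral>y. q y * w y \<partial>lborel)"
    unfolding B_def by (rule empirical_mean_conv_in_prob[OF indep Y q_nonneg _ int_w]) simp
  moreover have "(\<lambda>z. fst z / snd z) \<in> borel_measurable (borel :: (real \<times> real) measure)"
    by (intro borel_measurable_divide borel_measurable_continuous_onI continuous_intros)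
  moreover have "isCont (\<lambda>z. fst z / snd z) ((\<integral>y. q y * (w y * G y) \<partial>lborel), (\<integral>y. q y * w y \<partial>lborel))"
    using nonzero by (intro continuous_intros) simp_all
  ultimately have "conv_in_prob M (\<lambda>n \<omega>. A n \<omega> / B n \<omega>)
      ((\<integral>y. q y * (w y * G y) \<partial>lborel) / (\<integral>y. q y * w y \<partial>lborel))"
    by (rule conv_in_prob_continuous_map2[where f = "(/)", simplified])
  moreover have "A n \<omega> / B n \<omega> = (\<Sum>i<n. (w (Y i \<omega>) / (\<Sum>j<n. w (Y j \<omega>))) * G (Y i \<omega>))" for n \<omega>
    by (cases "n = 0") (simp_all add: A_def B_def sum_divide_distrib[symmetric])
  ultimately show ?thesis by simp
qed

section \<open>Derivatives along trajectories\<close>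

lemma grad_inner_eq_derivative:
  fixes f :: "'a::euclidean_space \<Rightarrow> real"
  assumes f: "(f has_derivative D) (at x)"
  shows "grad f x \<bullet> w = D w"
proof -
  have "D w = (\<Sum>b\<in>Basis. (w \<bullet> b) * D b)"
    using Linear_Algebra.linear_componentwise[OF has_derivative_linear[OF f], of w 1] by simp
  also have "\<dots> = grad f x \<bullet> w"
    unfolding grad_def frechet_derivative_at[OF f, symmetric] inner_sum_left
    by (intro sum.cong) (simp_all add: inner_commute)
  finally show ?thesis by simp
qed

lemma divergence_eq_derivative:
  assumes "(F has_derivative D) (at x)"
  shows "divergence F x = (\<Sum>b\<in>Basis. D b \<bullet> b)"
  unfolding divergence_def frechet_derivative_at[OF assms, symmetric] ..

lemma divergence_scaleR:
  fixes r :: "'a::euclidean_space \<Rightarrow> real" and V :: "'a \<Rightarrow> 'a"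
  assumes r: "(r has_derivative r') (at x)" and V: "(V has_derivative V') (at x)"
  shows "divergence (\<lambda>y. r y *\<^sub>R V y) x = r x * divergence V x + grad r x \<bullet> V x"
proof -
  have "divergence (\<lambda>y. r y *\<^sub>R V y) x = (\<Sum>b\<in>Basis. (r x *\<^sub>R V' b + r' b *\<^sub>R V x) \<bullet> b)"
    by (rule divergence_eq_derivative[OF has_derivative_scaleR[OF r V]])
  also have "\<dots> = r x * (\<Sum>b\<in>Basis. V' b \<bullet> b) + (\<Sum>b\<in>Basis. (V x \<bullet> b) * r' b)"
    by (simp add: inner_add_left sum.distrib sum_distrib_left mult.commute)
  also have "(\<Sum>b\<in>Basis. (V x \<bullet> b) * r' b) = grad r x \<bullet> V x"
    unfolding grad_inner_eq_derivative[OF r]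
    using Linear_Algebra.linear_componentwise[OF has_derivative_linear[OF r], of "V x" 1] by simp
  finally show ?thesis
    by (simp add: divergence_eq_derivative[OF V])
qed

text \<open>The difference quotients along \<open>h\<close> are bounded by \<open>L |h|\<close> and tend to \<open>f' h\<close>.\<close>
lemma norm_derivative_le_lipschitz:
  fixes f :: "'a::real_normed_vector \<Rightarrow> 'b::real_normed_vector"
  assumes f: "(f has_derivative f') (at x)" and lip: "\<And>y z. dist (f y) (f z) \<le> L * dist y z"
  shows "norm (f' h) \<le> L * norm h"
proof -
  have lin: "linear f'" using has_derivative_linear[OF f] .
  define q where "q \<tau> = norm (f (x + \<tau> *\<^sub>R h) - f x - f' (\<tau> *\<^sub>R h)) / norm \<tau>" for \<tau> :: real
  have "((\<lambda>\<tau>. x + \<tau> *\<^sub>R h) has_derivative (\<lambda>\<tau>. \<tau> *\<^sub>R h)) (at 0)"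
    using has_derivative_add_const[OF bounded_linear_imp_has_derivative[OF bounded_linear_scaleR_left], of h x]
    by (simp add: add.commute)
  from diff_chain_at[OF this, unfolded comp_def] f
  have "((\<lambda>\<tau>. f (x + \<tau> *\<^sub>R h)) has_derivative (\<lambda>\<tau>. f' (\<tau> *\<^sub>R h))) (at 0)"
    by simp
  then have q: "q \<midarrow>0\<rightarrow> 0"
    unfolding has_derivative_at q_def by simp
  have bound: "norm (f' h) \<le> L * norm h + q \<tau>" if "\<tau> \<noteq> 0" for \<tau>
  proof -
    have "\<bar>\<tau>\<bar> * norm (f' h) = norm (f' (\<tau> *\<^sub>R h))"
      using lin by (simp add: linear_scale)
    also have "\<dots> \<le> norm (f (x + \<tau> *\<^sub>R h) - f x) + norm (f (x + \<tau> *\<^sub>R h) - f x - f' (\<tau> *\<^sub>R h))"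
      using norm_triangle_ineq4[of "f (x + \<tau> *\<^sub>R h) - f x" "f (x + \<tau> *\<^sub>R h) - f x - f' (\<tau> *\<^sub>R h)"]
      by simp
    also have "\<dots> \<le> L * (\<bar>\<tau>\<bar> * norm h) + \<bar>\<tau>\<bar> * q \<tau>"
      using lip[of "x + \<tau> *\<^sub>R h" x] that by (simp add: q_def dist_norm)
    also have "\<dots> = \<bar>\<tau>\<bar> * (L * norm h + q \<tau>)"
      by (simp add: algebra_simps)
    finally show ?thesis
      by (rule mult_left_le_imp_le) (use that in simp)
  qed
  have "(\<lambda>\<tau>. L * norm h + q \<tau>) \<midarrow>0\<rightarrow> L * norm h + 0"
    by (intro tendsto_add tendsto_const q)
  moreover have "eventually (\<lambda>\<tau>. norm (f' h) \<le> L * norm h + q \<tau>) (at (0::real))"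
    unfolding eventually_at_filter by (rule always_eventually) (simp add: bound)
  ultimately have "norm (f' h) \<le> L * norm h + 0"
    by (rule tendsto_le[OF at_neq_bot _ tendsto_const])
  then show ?thesis by simp
qed

lemma abs_divergence_le_lipschitz:
  fixes V :: "'a::euclidean_space \<Rightarrow> 'a"
  assumes V: "V differentiable (at x)" and lip: "\<And>y z. dist (V y) (V z) \<le> L * dist y z"
  shows "\<bar>divergence V x\<bar> \<le> real DIM('a) * L"
proof -
  obtain V' where V': "(V has_derivative V') (at x)"
    using V unfolding differentiable_def by blast
  have "\<bar>divergence V x\<bar> \<le> (\<Sum>b\<in>(Basis::'a set). \<bar>V' b \<bullet> b\<bar>)"
    unfolding divergence_eq_derivative[OF V'] by (rule sum_abs)
  also have "\<dots> \<le> (\<Sum>b\<in>(Basis::'a set). L)"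
  proof (rule sum_mono)
    fix b :: 'a assume b: "b \<in> Basis"
    have "\<bar>V' b \<bullet> b\<bar> \<le> norm (V' b) * norm b" by (rule Cauchy_Schwarz_ineq2)
    also have "\<dots> \<le> L * norm b * norm b"
      using norm_derivative_le_lipschitz[OF V' lip, of b] by (simp add: mult_right_mono)
    finally show "\<bar>V' b \<bullet> b\<bar> \<le> L" using b by simp
  qed
  finally show ?thesis by simp
qed

lemma has_derivative_space_slice:
  fixes f :: "'a::euclidean_space \<Rightarrow> real \<Rightarrow> 'b::real_normed_vector"
  assumes D: "((\<lambda>(y, r). f y r) has_derivative D) (at (x, s) within UNIV \<times> S)" and s: "s \<in> S"
  shows "((\<lambda>y. f y s) has_derivative (\<lambda>h. D (h, 0))) (at x)"
proof -
  have "((\<lambda>y. (y, s)) has_derivative (\<lambda>h. (h, 0))) (at x)"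
    by (intro has_derivative_Pair has_derivative_ident has_derivative_const)
  moreover have "((\<lambda>(y, r). f y r) has_derivative D) (at (x, s) within range (\<lambda>y. (y, s)))"
    by (rule has_derivative_subset[OF D]) (use s in auto)
  ultimately have "(((\<lambda>(y, r). f y r) \<circ> (\<lambda>y. (y, s))) has_derivative (D \<circ> (\<lambda>h. (h, 0)))) (at x within UNIV)"
    by (intro diff_chain_within) simp_all
  then show ?thesis by (simp add: comp_def)
qed

lemma differentiable_space_slice:
  fixes f :: "'a::euclidean_space \<Rightarrow> real \<Rightarrow> 'b::real_normed_vector"
  assumes "(\<lambda>(y, r). f y r) differentiable (at (x, s) within UNIV \<times> S)" "s \<in> S"
  shows "(\<lambda>y. f y s) differentiable (at x)"
  using assms has_derivative_space_slice unfolding differentiable_def by blast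

lemma borel_measurable_space_slice:
  fixes f :: "'a::euclidean_space \<Rightarrow> real \<Rightarrow> 'b::real_normed_vector"
  assumes "\<And>x. (\<lambda>(y, r). f y r) differentiable (at (x, s) within UNIV \<times> S)" "s \<in> S"
  shows "(\<lambda>y. f y s) \<in> borel_measurable borel"
  using differentiable_space_slice[OF assms]
  by (intro borel_measurable_continuous_onI)
    (simp add: continuous_on_eq_continuous_at differentiable_imp_continuous_within)

lemma partial_t_eq_joint_derivative:
  fixes f :: "'a::euclidean_space \<Rightarrow> real \<Rightarrow> real"
  assumes D: "((\<lambda>(y, r). f y r) has_derivative D) (at (x, s) within UNIV \<times> {0..1})" and s: "s \<in> {0..1}"
  shows "partial_t f x s = D (0, 1)"
proof -
  have "((\<lambda>r. (x, r)) has_derivative (\<lambda>h. (0, h))) (at s within {0..1})"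
    by (intro has_derivative_Pair has_derivative_ident has_derivative_const)
  moreover have "((\<lambda>(y, r). f y r) has_derivative D) (at (x, s) within (\<lambda>r. (x, r)) ` {0..1})"
    by (rule has_derivative_subset[OF D]) auto
  ultimately have "(((\<lambda>(y, r). f y r) \<circ> (\<lambda>r. (x, r))) has_derivative (D \<circ> (\<lambda>h. (0, h))))
      (at s within {0..1})"
    by (intro diff_chain_within) simp_all
  then have "((\<lambda>r. f x r) has_derivative (\<lambda>h. D (0, h))) (at s within {0..1})"
    by (simp add: comp_def)
  moreover have "(\<lambda>h. D (0, h)) = (\<lambda>h. h *\<^sub>R D (0, 1))"
  proof
    show "D (0, h) = h *\<^sub>R D (0, 1)" for h
      using linear_scale[OF has_derivative_linear[OF D], of h "(0, 1)"] by simp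
  qed
  ultimately have "((\<lambda>r. f x r) has_vector_derivative D (0, 1)) (at s within {0..1})"
    unfolding has_vector_derivative_def by simp
  then show ?thesis
    unfolding partial_t_def using s by (intro vector_derivative_within_closed_interval) auto
qed

lemma has_real_derivative_along_path:
  fixes f :: "'a::euclidean_space \<Rightarrow> real \<Rightarrow> real" and \<gamma> :: "real \<Rightarrow> 'a"
  assumes f: "(\<lambda>(y, r). f y r) differentiable (at (\<gamma> s, s) within UNIV \<times> {0..1})"
    and s: "s \<in> {0..1}"
    and \<gamma>: "(\<gamma> has_vector_derivative w) (at s within {0..1})"
  shows "((\<lambda>r. f (\<gamma> r) r) has_real_derivative grad (\<lambda>y. f y s) (\<gamma> s) \<bullet> w + partial_t f (\<gamma> s) s)
           (at s within {0..1})"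
proof -
  obtain D where D: "((\<lambda>(y, r). f y r) has_derivative D) (at (\<gamma> s, s) within UNIV \<times> {0..1})"
    using f unfolding differentiable_def by blast
  have lin: "linear D" using has_derivative_linear[OF D] .
  have "((\<lambda>r. (\<gamma> r, r)) has_derivative (\<lambda>h. (h *\<^sub>R w, h))) (at s within {0..1})"
    using \<gamma> unfolding has_vector_derivative_def by (intro has_derivative_Pair has_derivative_ident)
  moreover have "((\<lambda>(y, r). f y r) has_derivative D) (at (\<gamma> s, s) within (\<lambda>r. (\<gamma> r, r)) ` {0..1})"
    by (rule has_derivative_subset[OF D]) auto
  ultimately have "(((\<lambda>(y, r). f y r) \<circ> (\<lambda>r. (\<gamma> r, r))) has_derivative (D \<circ> (\<lambda>h. (h *\<^sub>R w, h))))
      (at s within {0..1})"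
    by (intro diff_chain_within) simp_all
  then have "((\<lambda>r. f (\<gamma> r) r) has_derivative (\<lambda>h. D (h *\<^sub>R w, h))) (at s within {0..1})"
    by (simp add: comp_def)
  moreover have "(\<lambda>h. D (h *\<^sub>R w, h)) = (*) (D (w, 1))"
  proof
    show "D (h *\<^sub>R w, h) = D (w, 1) * h" for h
      using linear_scale[OF lin, of h "(w, 1)"] by simp
  qed
  ultimately have "((\<lambda>r. f (\<gamma> r) r) has_real_derivative D (w, 1)) (at s within {0..1})"
    unfolding has_field_derivative_def by simp
  moreover have "D (w, 1) = D (w, 0) + D (0, 1)"
    using linear_add[OF lin, of "(w, 0)" "(0, 1)"] by simp
  moreover have "grad (\<lambda>y. f y s) (\<gamma> s) \<bullet> w = D (w, 0)"
    by (rule grad_inner_eq_derivative[OF has_derivative_space_slice[OF D s]])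
  ultimately show ?thesis
    using partial_t_eq_joint_derivative[OF D s] by simp
qed

lemma smooth_on_imp_differentiable:
  assumes "smooth_on S f" "x \<in> S"
  shows "f differentiable (at x within S)"
  using assms unfolding smooth_on_def by (metis empty_subsetI empty_set iter_partial.simps(1))

lemma differentiable_ln:
  fixes f :: "'a::real_normed_vector \<Rightarrow> real"
  assumes "f differentiable (at x within S)" "f x > 0"
  shows "(\<lambda>y. ln (f y)) differentiable (at x within S)"
proof -
  obtain D where "(f has_derivative D) (at x within S)"
    using assms(1) unfolding differentiable_def by blast
  from DERIV_compose_FDERIV[OF DERIV_ln[OF assms(2)] this] show ?thesis
    unfolding differentiable_def by blast
qed

lemma le_of_has_real_derivative_nonneg:
  fixes u u' :: "real \<Rightarrow> real"
  assumes ab: "a \<le> b"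
    and u: "\<And>s. s \<in> {a..b} \<Longrightarrow> (u has_real_derivative u' s) (at s within {a..b})"
    and nonneg: "\<And>s. s \<in> {a..b} \<Longrightarrow> u' s \<ge> 0"
  shows "u a \<le> u b"
proof -
  have "(u' has_integral (u b - u a)) {a..b}"
    using ab u by (intro fundamental_theorem_of_calculus) (auto simp: has_real_derivative_iff_has_vector_derivative)
  then have "0 \<le> u b - u a" using nonneg by (rule has_integral_nonneg)
  then show ?thesis by simp
qed

text \<open>Since \<open>p(s)\<^sup>2 exp(2Ks)\<close> is nondecreasing, \<open>p\<close> cannot vanish, so it keeps its initial sign.\<close>
lemma pos_of_linear_ode:
  fixes p a :: "real \<Rightarrow> real"
  assumes p: "\<And>s. s \<in> {0..1} \<Longrightarrow> (p has_real_derivative - p s * a s) (at s within {0..1})"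
    and a: "\<And>s. s \<in> {0..1} \<Longrightarrow> \<bar>a s\<bar> \<le> K"
    and p0: "p 0 > 0" and s: "s \<in> {0..1}"
  shows "p s > 0"
proof -
  have nonzero: "p r \<noteq> 0" if r: "r \<in> {0..1}" for r
  proof -
    let ?u = "\<lambda>r. p r * p r * exp (2 * K * r)"
    have "?u 0 \<le> ?u r"
    proof (rule le_of_has_real_derivative_nonneg[where u = ?u and a = 0 and b = r
          and u' = "\<lambda>q. 2 * (p q * p q) * exp (2 * K * q) * (K - a q)"])
      fix q assume q: "q \<in> {0..r}"
      then have q1: "q \<in> {0..1}" using r by auto
      have pq: "(p has_real_derivative - p q * a q) (at q within {0..r})"
        using DERIV_subset[OF p[OF q1]] r by auto
      have "((\<lambda>r. 2 * K * r) has_real_derivative 2 * K) (at q within {0..r})"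
        using DERIV_cmult[OF DERIV_ident, of "2 * K" q "{0..r}"] by simp
      from DERIV_chain2[OF DERIV_exp this]
      have "((\<lambda>r. exp (2 * K * r)) has_real_derivative exp (2 * K * q) * (2 * K)) (at q within {0..r})" .
      from DERIV_mult[OF DERIV_mult[OF pq pq] this]
      show "(?u has_real_derivative 2 * (p q * p q) * exp (2 * K * q) * (K - a q)) (at q within {0..r})"
        by (rule DERIV_cong) (simp add: algebra_simps)
      show "0 \<le> 2 * (p q * p q) * exp (2 * K * q) * (K - a q)"
        using a[OF q1] by simp
    qed (use r in simp)
    moreover have "0 < ?u 0" using p0 by simp
    ultimately show ?thesis by auto
  qed
  have "continuous_on {0..1} p"
    unfolding continuous_on_eq_continuous_within using p by (blast intro: DERIV_continuous)
  then have cont: "continuous_on {0..s} p"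
    by (rule continuous_on_subset) (use s in auto)
  show ?thesis
  proof (rule ccontr)
    assume "\<not> p s > 0"
    then obtain r where "0 \<le> r" "r \<le> s" "p r = 0"
      using IVT2'[of p s 0 0, OF _ _ _ cont] p0 s by auto
    then show False using nonzero[of r] s by auto
  qed
qed

lemma has_real_derivative_inner_self:
  fixes D :: "real \<Rightarrow> 'a::real_inner"
  assumes "(D has_vector_derivative D') (at s within S)"
  shows "((\<lambda>r. D r \<bullet> D r) has_real_derivative 2 * (D s \<bullet> D')) (at s within S)"
proof -
  have "(D has_derivative (\<lambda>h. h *\<^sub>R D')) (at s within S)"
    using assms by (simp add: has_vector_derivative_def)
  from has_derivative_inner[OF this this]
  have "((\<lambda>r. D r \<bullet> D r) has_derivative (\<lambda>h. D s \<bullet> (h *\<^sub>R D') + (h *\<^sub>R D') \<bullet> D s)) (at s within S)" .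
  moreover have "(\<lambda>h. D s \<bullet> (h *\<^sub>R D') + (h *\<^sub>R D') \<bullet> D s) = (*) (2 * (D s \<bullet> D'))"
    by (auto simp: fun_eq_iff inner_commute algebra_simps)
  ultimately show ?thesis
    by (simp add: has_field_derivative_def)
qed

text \<open>Gronwall: \<open>|X x\<^sub>0 s - X y\<^sub>0 s|\<^sup>2 exp(-2Ls)\<close> is nonincreasing.\<close>
lemma flow_dist_le:
  fixes v :: "'a::euclidean_space \<Rightarrow> real \<Rightarrow> 'a" and X :: "'a \<Rightarrow> real \<Rightarrow> 'a"
  assumes lip: "\<And>s x y. s \<in> {0..1} \<Longrightarrow> dist (v x s) (v y s) \<le> L * dist x y"
    and ode: "\<And>x0 s. s \<in> {0..1} \<Longrightarrow> (X x0 has_vector_derivative v (X x0 s) s) (at s within {0..1})"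
    and init: "\<And>x0. X x0 0 = x0"
    and t: "t \<in> {0..1}"
  shows "dist (X x0 t) (X y0 t) \<le> exp (L * t) * dist x0 y0"
proof -
  define D where "D s = X x0 s - X y0 s" for s
  define D' where "D' s = v (X x0 s) s - v (X y0 s) s" for s
  define u where "u s = - ((D s \<bullet> D s) * exp (- 2 * L * s))" for s
  define u' where "u' s = - (2 * (D s \<bullet> D' s) * exp (- 2 * L * s) + exp (- 2 * L * s) * (- 2 * L) * (D s \<bullet> D s))"
    for s
  have "u 0 \<le> u t"
  proof (rule le_of_has_real_derivative_nonneg[where u = u and a = 0 and b = t and u' = u'])
    fix s assume s: "s \<in> {0..t}"
    then have s1: "s \<in> {0..1}" using t by auto
    have "(D has_vector_derivative D' s) (at s within {0..t})"
      unfolding D_def D'_def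
      by (rule has_vector_derivative_diff; rule has_vector_derivative_within_subset[OF ode[OF s1]])
        (use t in auto)
    then have "((\<lambda>r. D r \<bullet> D r) has_real_derivative 2 * (D s \<bullet> D' s)) (at s within {0..t})"
      by (rule has_real_derivative_inner_self)
    moreover have "((\<lambda>r. exp (- 2 * L * r)) has_real_derivative exp (- 2 * L * s) * (- 2 * L))
        (at s within {0..t})"
      using DERIV_chain2[OF DERIV_exp DERIV_cmult[OF DERIV_ident, of "- 2 * L" s "{0..t}"]] by simp
    ultimately show "(u has_real_derivative u' s) (at s within {0..t})"
      unfolding u_def u'_def by (intro DERIV_minus DERIV_mult)
    have "D s \<bullet> D' s \<le> norm (D s) * norm (D' s)" by (rule norm_cauchy_schwarz)
    also have "\<dots> \<le> norm (D s) * (L * norm (D s))"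
      using lip[OF s1, of "X x0 s" "X y0 s"] by (intro mult_left_mono) (simp_all add: D_def D'_def dist_norm)
    finally have "D s \<bullet> D' s \<le> L * (D s \<bullet> D s)"
      by (simp add: dot_square_norm power2_eq_square mult_ac)
    then show "0 \<le> u' s"
      by (simp add: u'_def mult_le_0_iff algebra_simps)
  qed (use t in simp)
  then have "(D t \<bullet> D t) \<le> (D 0 \<bullet> D 0) * exp (2 * L * t)"
    by (simp add: u_def exp_minus field_simps)
  then have "(norm (D t))\<^sup>2 \<le> (exp (L * t) * norm (D 0))\<^sup>2"
    by (simp add: power2_norm_eq_inner power_mult_distrib exp_double[symmetric] mult_ac)
  then have "norm (D t) \<le> exp (L * t) * norm (D 0)"
    by (rule power2_le_imp_le) simp
  then show ?thesis by (simp add: D_def init dist_norm)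
qed

lemma continuous_on_flow:
  fixes v :: "'a::euclidean_space \<Rightarrow> real \<Rightarrow> 'a" and X :: "'a \<Rightarrow> real \<Rightarrow> 'a"
  assumes "\<And>s x y. s \<in> {0..1} \<Longrightarrow> dist (v x s) (v y s) \<le> L * dist x y"
    and "\<And>x0 s. s \<in> {0..1} \<Longrightarrow> (X x0 has_vector_derivative v (X x0 s) s) (at s within {0..1})"
    and "\<And>x0. X x0 0 = x0"
    and "t \<in> {0..1}"
  shows "continuous_on UNIV (\<lambda>x0. X x0 t)"
proof -
  have "(exp (L * t))-lipschitz_on UNIV (\<lambda>x0. X x0 t)"
    by (rule lipschitz_onI) (use flow_dist_le[OF assms] in auto)
  then show ?thesis by (rule lipschitz_on_continuous_on)
qed

section \<open>The importance weights\<close>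

lemma Zc_pos:
  fixes rho :: "'a::euclidean_space \<Rightarrow> real \<Rightarrow> real"
  assumes pos: "\<And>y. rho y t > 0" and int: "integrable lborel (\<lambda>x. rho x t)"
  shows "Zc rho t > 0"
proof -
  have nonneg: "AE x in lborel. 0 \<le> rho x t" using pos by (simp add: less_imp_le)
  have "Zc rho t \<noteq> 0"
  proof
    assume "Zc rho t = 0"
    then have "AE x in lborel. rho x t = 0"
      using integral_nonneg_eq_0_iff_AE[OF int nonneg] unfolding Zc_def by simp
    then have "AE x::'a in lborel. False"
      by eventually_elim (metis pos less_irrefl)
    then show False
      using ae_filter_eq_bot_iff[of "lborel :: 'a measure"] by (simp add: eventually_False)
  qed
  moreover have "Zc rho t \<ge> 0"
    unfolding Zc_def using nonneg by (rule integral_nonneg_AE)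
  ultimately show ?thesis by simp
qed

lemma continuity_equation_along_flow:
  fixes rt :: "'a::euclidean_space \<Rightarrow> real \<Rightarrow> real" and v :: "'a \<Rightarrow> real \<Rightarrow> 'a"
    and \<gamma> :: "real \<Rightarrow> 'a"
  assumes rt: "(\<lambda>(y, r). rt y r) differentiable (at (\<gamma> s, s) within UNIV \<times> {0..1})"
    and pde: "partial_t rt (\<gamma> s) s = - divergence (\<lambda>y. rt y s *\<^sub>R v y s) (\<gamma> s)"
    and v: "(\<lambda>y. v y s) differentiable (at (\<gamma> s))"
    and \<gamma>: "(\<gamma> has_vector_derivative v (\<gamma> s) s) (at s within {0..1})"
    and s: "s \<in> {0..1}"
  shows "((\<lambda>r. rt (\<gamma> r) r) has_real_derivative - rt (\<gamma> s) s * divergence (\<lambda>y. v y s) (\<gamma> s))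
           (at s within {0..1})"
proof -
  obtain r' where r': "((\<lambda>y. rt y s) has_derivative r') (at (\<gamma> s))"
    using differentiable_space_slice[OF rt s] unfolding differentiable_def by blast
  obtain v' where v': "((\<lambda>y. v y s) has_derivative v') (at (\<gamma> s))"
    using v unfolding differentiable_def by blast
  have "grad (\<lambda>y. rt y s) (\<gamma> s) \<bullet> v (\<gamma> s) s + partial_t rt (\<gamma> s) s
      = - rt (\<gamma> s) s * divergence (\<lambda>y. v y s) (\<gamma> s)"
    using pde divergence_scaleR[OF r' v'] by simp
  then show ?thesis
    using has_real_derivative_along_path[OF rt s \<gamma>] by simp
qed

text \<open>The expectation term depends on \<open>s\<close> only; it ends up in the constant factor of the weights.\<close>
lemma has_real_derivative_log_density_ratio:
  fixes rho :: "'a::euclidean_space \<Rightarrow> real \<Rightarrow> real" and v :: "'a \<Rightarrow> real \<Rightarrow> 'a"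
    and \<gamma> :: "real \<Rightarrow> 'a" and p :: "real \<Rightarrow> real"
  assumes rho: "(\<lambda>(y, r). rho y r) differentiable (at (\<gamma> s, s) within UNIV \<times> {0..1})"
    and rho_pos: "rho (\<gamma> s) s > 0"
    and p: "(p has_real_derivative - p s * divergence (\<lambda>y. v y s) (\<gamma> s)) (at s within {0..1})"
    and p_pos: "p s > 0"
    and \<gamma>: "(\<gamma> has_vector_derivative v (\<gamma> s) s) (at s within {0..1})"
    and s: "s \<in> {0..1}"
  shows "((\<lambda>r. ln (rho (\<gamma> r) r) - ln (p r)) has_real_derivative
           epsf rho v (\<gamma> s) s + (\<integral>y. partial_t (\<lambda>y s. ln (rho y s)) y s \<partial>star_measure rho s))
         (at s within {0..1})"
proof -
  have "(\<lambda>(y, r). ln (rho y r)) differentiable (at (\<gamma> s, s) within UNIV \<times> {0..1})"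
    using differentiable_ln[OF rho] rho_pos by (simp add: case_prod_beta')
  from has_real_derivative_along_path[OF this s \<gamma>]
  have "((\<lambda>r. ln (rho (\<gamma> r) r)) has_real_derivative
      grad (\<lambda>y. ln (rho y s)) (\<gamma> s) \<bullet> v (\<gamma> s) s + partial_t (\<lambda>y s. ln (rho y s)) (\<gamma> s) s)
      (at s within {0..1})"
    by simp
  moreover have "((\<lambda>r. ln (p r)) has_real_derivative 1 / p s * (- p s * divergence (\<lambda>y. v y s) (\<gamma> s)))
      (at s within {0..1})"
    by (rule DERIV_chain2[OF DERIV_ln_divide[OF p_pos] p])
  ultimately have "((\<lambda>r. ln (rho (\<gamma> r) r) - ln (p r)) has_real_derivative
      grad (\<lambda>y. ln (rho y s)) (\<gamma> s) \<bullet> v (\<gamma> s) s + partial_t (\<lambda>y s. ln (rho y s)) (\<gamma> s) s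
      - 1 / p s * (- p s * divergence (\<lambda>y. v y s) (\<gamma> s))) (at s within {0..1})"
    by (rule DERIV_diff)
  moreover have "grad (\<lambda>y. ln (rho y s)) (\<gamma> s) \<bullet> v (\<gamma> s) s + partial_t (\<lambda>y s. ln (rho y s)) (\<gamma> s) s
      - 1 / p s * (- p s * divergence (\<lambda>y. v y s) (\<gamma> s))
      = epsf rho v (\<gamma> s) s + (\<integral>y. partial_t (\<lambda>y s. ln (rho y s)) y s \<partial>star_measure rho s)"
    using p_pos by (simp add: epsf_def gfun_def score_def)
  ultimately show ?thesis by simp
qed

lemma density_along_flow:
  fixes rho_theta :: "'a::euclidean_space \<Rightarrow> real \<Rightarrow> real" and v X :: "'a \<Rightarrow> real \<Rightarrow> 'a"
  assumes rt_diff: "\<And>x s. s \<in> {0..1} \<Longrightarrow>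
                    (\<lambda>(y, r). rho_theta y r) differentiable (at (x, s) within UNIV \<times> {0..1})"
    and pde: "\<And>x s. s \<in> {0..1} \<Longrightarrow> partial_t rho_theta x s = - divergence (\<lambda>y. rho_theta y s *\<^sub>R v y s) x"
    and v_diff: "\<And>x s. s \<in> {0..1} \<Longrightarrow> (\<lambda>y. v y s) differentiable (at x)"
    and v_lip: "\<And>s x y. s \<in> {0..1} \<Longrightarrow> dist (v x s) (v y s) \<le> L * dist x y"
    and flow_ode: "\<And>x0 s. s \<in> {0..1} \<Longrightarrow> (X x0 has_vector_derivative v (X x0 s) s) (at s within {0..1})"
    and pos0: "rho_theta (X x0 0) 0 > 0"
    and s: "s \<in> {0..1}"
  shows "((\<lambda>r. rho_theta (X x0 r) r) has_real_derivative
           - rho_theta (X x0 s) s * divergence (\<lambda>y. v y s) (X x0 s)) (at s within {0..1})"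
    and "rho_theta (X x0 s) s > 0"
proof -
  have p: "((\<lambda>r. rho_theta (X x0 r) r) has_real_derivative
      - rho_theta (X x0 r) r * divergence (\<lambda>y. v y r) (X x0 r)) (at r within {0..1})"
    if "r \<in> {0..1}" for r
    by (rule continuity_equation_along_flow[where \<gamma> = "X x0" and rt = rho_theta and v = v,
          OF rt_diff[OF that] pde[OF that] v_diff[OF that] flow_ode[OF that] that])
  then show "((\<lambda>r. rho_theta (X x0 r) r) has_real_derivative
      - rho_theta (X x0 s) s * divergence (\<lambda>y. v y s) (X x0 s)) (at s within {0..1})"
    using s .
  show "rho_theta (X x0 s) s > 0"
  proof (rule pos_of_linear_ode[OF p _ pos0 s])
    show "\<bar>divergence (\<lambda>y. v y r) (X x0 r)\<bar> \<le> real DIM('a) * L" if "r \<in> {0..1}" for r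
      using abs_divergence_le_lipschitz[OF v_diff v_lip] that by blast
  qed
qed

lemma wtilde_eq_density_ratio:
  fixes rho rho_theta :: "'a::euclidean_space \<Rightarrow> real \<Rightarrow> real" and v X :: "'a \<Rightarrow> real \<Rightarrow> 'a"
  assumes rho_pos: "\<And>x s. s \<in> {0..1} \<Longrightarrow> rho x s > 0"
    and rho_diff: "\<And>x s. s \<in> {0..1} \<Longrightarrow> (\<lambda>(y, r). rho y r) differentiable (at (x, s) within UNIV \<times> {0..1})"
    and v_diff: "\<And>x s. s \<in> {0..1} \<Longrightarrow> (\<lambda>y. v y s) differentiable (at x)"
    and v_lip: "\<And>s x y. s \<in> {0..1} \<Longrightarrow> dist (v x s) (v y s) \<le> L * dist x y"
    and flow_init: "\<And>x0. X x0 0 = x0"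
    and flow_ode: "\<And>x0 s. s \<in> {0..1} \<Longrightarrow> (X x0 has_vector_derivative v (X x0 s) s) (at s within {0..1})"
    and rt_diff: "\<And>x s. s \<in> {0..1} \<Longrightarrow>
                    (\<lambda>(y, r). rho_theta y r) differentiable (at (x, s) within UNIV \<times> {0..1})"
    and pde: "\<And>x s. s \<in> {0..1} \<Longrightarrow> partial_t rho_theta x s = - divergence (\<lambda>y. rho_theta y s *\<^sub>R v y s) x"
    and rt_init: "\<And>x. rho_theta x 0 = rho x 0"
    and t: "t \<in> {0..1}"
    and w_int: "\<And>x0. (\<lambda>s. epsf rho v (X x0 s) s) integrable_on {0..t}"
  shows "\<exists>C>0. \<forall>x0. wtilde rho v X t x0 = C * (rho (X x0 t) t / rho_theta (X x0 t) t)"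
proof -
  define m where "m s = (\<integral>y. partial_t (\<lambda>y s. ln (rho y s)) y s \<partial>star_measure rho s)" for s
  define C where "C = exp (- integral {0..t} m)"
  have "wtilde rho v X t x0 = C * (rho (X x0 t) t / rho_theta (X x0 t) t)" for x0
  proof -
    define p where "p s = rho_theta (X x0 s) s" for s
    have p0: "p 0 > 0"
      using rho_pos[of 0] by (simp add: p_def flow_init rt_init)
    have p: "(p has_real_derivative - p s * divergence (\<lambda>y. v y s) (X x0 s)) (at s within {0..1})"
      and p_pos: "p s > 0" if "s \<in> {0..1}" for s
      using density_along_flow[where rho_theta = rho_theta and v = v and X = X,
          OF rt_diff pde v_diff v_lip flow_ode p0[unfolded p_def] that]
      unfolding p_def by blast+
    define Lf where "Lf s = ln (rho (X x0 s) s) - ln (p s)" for s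
    have "((\<lambda>s. epsf rho v (X x0 s) s + m s) has_integral Lf t - Lf 0) {0..t}"
    proof (rule fundamental_theorem_of_calculus)
      fix s assume "s \<in> {0..t}"
      then have s: "s \<in> {0..1}" using t by auto
      have "(Lf has_real_derivative epsf rho v (X x0 s) s + m s) (at s within {0..1})"
        unfolding Lf_def m_def
        by (rule has_real_derivative_log_density_ratio[where \<gamma> = "X x0" and rho = rho and v = v,
              OF rho_diff[OF s] rho_pos[OF s] p[OF s] p_pos[OF s] flow_ode[OF s] s])
      then show "(Lf has_vector_derivative epsf rho v (X x0 s) s + m s) (at s within {0..t})"
        using t by (auto simp: has_real_derivative_iff_has_vector_derivative[symmetric] intro: DERIV_subset)
    qed (use t in auto)
    from has_integral_diff[OF this integrable_integral[OF w_int[of x0]]]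
    have "(m has_integral Lf t - Lf 0 - integral {0..t} (\<lambda>s. epsf rho v (X x0 s) s)) {0..t}"
      by simp
    moreover have "Lf 0 = 0"
      by (simp add: Lf_def p_def flow_init rt_init)
    ultimately have "integral {0..t} (\<lambda>s. epsf rho v (X x0 s) s) = Lf t - integral {0..t} m"
      by (simp add: integral_unique)
    then have "wtilde rho v X t x0 = exp (Lf t - integral {0..t} m)"
      by (simp add: wtilde_def)
    also have "\<dots> = C * exp (Lf t)"
      by (simp add: C_def exp_diff exp_minus field_simps)
    also have "exp (Lf t) = rho (X x0 t) t / p t"
      using rho_pos[OF t] p_pos[OF t] by (simp add: Lf_def exp_diff)
    finally show ?thesis
      by (simp add: p_def)
  qed
  moreover have "C > 0" by (simp add: C_def)
  ultimately show ?thesis by blast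
qed

section \<open>Consistency of the estimator\<close>

lemma integral_star_measure:
  fixes rho :: "'a::euclidean_space \<Rightarrow> real \<Rightarrow> real" and G :: "'a \<Rightarrow> real"
  assumes [measurable]: "(\<lambda>y. rho y t) \<in> borel_measurable borel"
    and pos: "\<And>y. rho y t > 0" and Z: "Zc rho t > 0"
    and G: "integrable (star_measure rho t) G"
  shows "integrable lborel (\<lambda>y. rho y t * G y)"
    and "(\<integral>x. G x \<partial>star_measure rho t) = (\<integral>y. rho y t * G y \<partial>lborel) / Zc rho t"
proof -
  have "G \<in> borel_measurable (star_measure rho t)"
    using G by auto
  then have [measurable]: "G \<in> borel_measurable borel"
    unfolding star_measure_def by simp
  have [measurable]: "(\<lambda>x. rho_star rho x t) \<in> borel_measurable borel"
    unfolding rho_star_def by measurable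
  have nonneg: "rho_star rho y t \<ge> 0" for y
    using pos[of y] Z by (simp add: rho_star_def)
  have "integrable lborel (\<lambda>y. rho_star rho y t * G y)"
    using G nonneg unfolding star_measure_def by (subst (asm) integrable_density) auto
  then have "integrable lborel (\<lambda>y. Zc rho t * (rho_star rho y t * G y))"
    by simp
  then show "integrable lborel (\<lambda>y. rho y t * G y)"
    using Z by (simp add: rho_star_def)
  have "(\<integral>x. G x \<partial>star_measure rho t) = (\<integral>y. rho_star rho y t * G y \<partial>lborel)"
    using G nonneg unfolding star_measure_def by (subst integral_density) auto
  then show "(\<integral>x. G x \<partial>star_measure rho t) = (\<integral>y. rho y t * G y \<partial>lborel) / Zc rho t"
    by (simp add: rho_star_def)
qed

lemma estimator_conv_in_prob:
  fixes rho rho_theta :: "'a::euclidean_space \<Rightarrow> real \<Rightarrow> real" and v X :: "'a \<Rightarrow> real \<Rightarrow> 'a"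
    and M :: "'w measure" and xs :: "nat \<Rightarrow> 'w \<Rightarrow> 'a" and G :: "'a \<Rightarrow> real"
  assumes M: "prob_space M"
    and xs_indep: "prob_space.indep_vars M (\<lambda>_. borel) xs UNIV"
    and xs_distr: "\<And>i. distributed M lborel (xs i) (\<lambda>x. ennreal (rho x 0))"
    and push: "distr (density lborel (\<lambda>x. ennreal (rho x 0))) lborel (\<lambda>x0. X x0 t)
                 = density lborel (\<lambda>x. ennreal (rho_theta x t))"
    and [measurable]: "(\<lambda>x0. X x0 t) \<in> borel_measurable borel" "(\<lambda>y. rho y t) \<in> borel_measurable borel"
      "(\<lambda>y. rho_theta y t) \<in> borel_measurable borel"
    and rho_pos: "\<And>y. rho y t > 0" and rt_pos: "\<And>y. rho_theta y t > 0"
    and Z: "integrable lborel (\<lambda>y. rho y t)"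
    and C: "C > 0" and w: "\<And>x0. wtilde rho v X t x0 = C * (rho (X x0 t) t / rho_theta (X x0 t) t)"
    and G: "integrable (star_measure rho t) G"
  shows "conv_in_prob M (\<lambda>N \<omega>. estimator rho v X t G (\<lambda>i. xs i \<omega>) N) (\<integral>x. G x \<partial>star_measure rho t)"
proof -
  interpret prob_space M by (rule M)
  have Zc: "Zc rho t > 0" by (rule Zc_pos[where rho = rho, OF rho_pos Z])
  have "G \<in> borel_measurable (star_measure rho t)"
    using G by auto
  then have [measurable]: "G \<in> borel_measurable borel"
    unfolding star_measure_def by simp
  define q where "q y = rho_theta y t" for y
  define u where "u y = C * (rho y t / rho_theta y t)" for y
  have qu: "q y * u y = C * rho y t" for y
    using rt_pos[of y] by (simp add: q_def u_def)
  have quG: "q y * (u y * G y) = C * (rho y t * G y)" for y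
    by (metis mult.assoc qu)
  have "conv_in_prob M (\<lambda>n \<omega>. \<Sum>i<n. (u (X (xs i \<omega>) t) / (\<Sum>j<n. u (X (xs j \<omega>) t))) * G (X (xs i \<omega>) t))
      ((\<integral>y. q y * (u y * G y) \<partial>lborel) / (\<integral>y. q y * u y \<partial>lborel))"
  proof (rule self_normalised_importance_sampling)
    show "indep_vars (\<lambda>_. borel) (\<lambda>i \<omega>. X (xs i \<omega>) t) UNIV"
      by (rule indep_vars_compose2[where Y = "\<lambda>_ x0. X x0 t" and N = "\<lambda>_. borel", OF xs_indep]) simp
    show "distributed M lborel (\<lambda>\<omega>. X (xs i \<omega>) t) (\<lambda>y. ennreal (q y))" for i
      unfolding q_def by (rule distributed_comp[OF xs_distr _ _ push]) simp_all
    show "integrable lborel (\<lambda>y. q y * u y)"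
      unfolding qu using Z by simp
    show "integrable lborel (\<lambda>y. q y * (u y * G y))"
      unfolding quG using integral_star_measure(1)[OF _ rho_pos Zc G] by simp
    show "(\<integral>y. q y * u y \<partial>lborel) \<noteq> 0"
      using C Zc by (simp add: qu Zc_def)
  qed (use rt_pos in \<open>auto simp: q_def u_def less_imp_le\<close>)
  moreover have "(\<integral>y. q y * (u y * G y) \<partial>lborel) / (\<integral>y. q y * u y \<partial>lborel) = (\<integral>x. G x \<partial>star_measure rho t)"
    using C integral_star_measure(2)[OF _ rho_pos Zc G]
    by (simp add: quG qu Zc_def)
  ultimately show ?thesis
    by (simp add: estimator_def w u_def)
qed

theorem proposition2:
  fixes rho :: "'a::euclidean_space \<Rightarrow> real \<Rightarrow> real"   \<comment> \<open>unnormalised density rho_tilde_*\<close>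
    and v :: "'a \<Rightarrow> real \<Rightarrow> 'a"                           \<comment> \<open>velocity field v_theta\<close>
    and X :: "'a \<Rightarrow> real \<Rightarrow> 'a"                           \<comment> \<open>flow: X x0 t = x(t;x0)\<close>
    and rho_theta :: "'a \<Rightarrow> real \<Rightarrow> real"                 \<comment> \<open>pushed-forward density rho_theta\<close>
    and M :: "'w measure" and xs :: "nat \<Rightarrow> 'w \<Rightarrow> 'a"      \<comment> \<open>i.i.d. samples x0^(i)\<close>
    and F :: "'a \<Rightarrow> real" and t :: real
  assumes rho_pos: "\<And>x s. s \<in> {0..1} \<Longrightarrow> rho x s > 0"
    and rho_smooth: "smooth_on (UNIV \<times> {0..1}) (\<lambda>(x, s). rho x s)"
    and rho_Z: "\<And>s. s \<in> {0..1} \<Longrightarrow> integrable lborel (\<lambda>x. rho x s)"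
    and mu_normalised: "(\<integral>x. rho x 0 \<partial>lborel) = 1"
    and v_smooth: "smooth_on (UNIV \<times> {0..1}) (\<lambda>(x, s). v x s)"
    and v_lipschitz: "\<exists>L. \<forall>s\<in>{0..1}. \<forall>x y. dist (v x s) (v y s) \<le> L * dist x y"
    and flow_init: "\<And>x0. X x0 0 = x0"
    and flow_ode: "\<And>x0 s. s \<in> {0..1} \<Longrightarrow>
                     ((X x0) has_vector_derivative v (X x0 s) s) (at s within {0..1})"
    and rho_theta_diff: "\<And>x s. s \<in> {0..1} \<Longrightarrow>
                     (\<lambda>(y, r). rho_theta y r) differentiable (at (x, s) within UNIV \<times> {0..1})"
    and rho_theta_pde: "\<And>x s. s \<in> {0..1} \<Longrightarrow>
                     partial_t rho_theta x s = - divergence (\<lambda>y. rho_theta y s *\<^sub>R v y s) x"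
    and rho_theta_init: "\<And>x. rho_theta x 0 = rho x 0"
    and rho_theta_pushforward: "\<And>s. s \<in> {0..1} \<Longrightarrow>
                     distr (density lborel (\<lambda>x. ennreal (rho x 0))) lborel (\<lambda>x0. X x0 s)
                       = density lborel (\<lambda>x. ennreal (rho_theta x s))"
    and t_range: "t \<in> {0..1}"
    and dominates: "\<And>x. rho_star rho x t > 0 \<Longrightarrow> rho_theta x t > 0"
    and w_welldef: "\<And>x0. (\<lambda>s. epsf rho v (X x0 s) s) integrable_on {0..t}"
    and F_int: "integrable (star_measure rho t) F"
    and M_prob: "prob_space M"
    and xs_indep: "prob_space.indep_vars M (\<lambda>_. borel) xs UNIV"
    and xs_distr: "\<And>i. distributed M lborel (xs i) (\<lambda>x. ennreal (rho x 0))"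
  shows "conv_in_prob M (\<lambda>N \<omega>. estimator rho v X t F (\<lambda>i. xs i \<omega>) N)
           (\<integral>x. F x \<partial>star_measure rho t)
       \<and> (integrable (star_measure rho t) (\<lambda>x. partial_t (\<lambda>y s. ln (rho y s)) x t) \<longrightarrow>
           conv_in_prob M
             (\<lambda>N \<omega>. estimator rho v X t (\<lambda>x. partial_t (\<lambda>y s. ln (rho y s)) x t) (\<lambda>i. xs i \<omega>) N)
             (\<integral>x. partial_t (\<lambda>y s. ln (rho y s)) x t \<partial>star_measure rho t))"
proof -
  obtain L where L: "\<And>s x y. s \<in> {0..1} \<Longrightarrow> dist (v x s) (v y s) \<le> L * dist x y"
    using v_lipschitz by blast
  have rho_diff: "(\<lambda>(y, r). rho y r) differentiable (at (x, s) within UNIV \<times> {0..1})"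
    if "s \<in> {0..1}" for x s
    using smooth_on_imp_differentiable[OF rho_smooth] that by simp
  have v_diff: "(\<lambda>y. v y s) differentiable (at x)" if "s \<in> {0..1}" for x s
    using differentiable_space_slice[OF smooth_on_imp_differentiable[OF v_smooth]] that by simp
  obtain C where C: "C > 0"
    and w: "\<And>x0. wtilde rho v X t x0 = C * (rho (X x0 t) t / rho_theta (X x0 t) t)"
    using wtilde_eq_density_ratio[OF rho_pos rho_diff v_diff L flow_init flow_ode rho_theta_diff
        rho_theta_pde rho_theta_init t_range w_welldef] by blast
  have rho_t_pos: "\<And>y. rho y t > 0" and Z: "integrable lborel (\<lambda>y. rho y t)"
    using rho_pos rho_Z t_range by auto
  have rt_pos: "\<And>y. rho_theta y t > 0"
    using dominates rho_t_pos Zc_pos[where rho = rho, OF rho_t_pos Z] by (simp add: rho_star_def)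
  have "(\<lambda>x0. X x0 t) \<in> borel_measurable borel"
    by (rule borel_measurable_continuous_onI[OF continuous_on_flow[OF L flow_ode flow_init t_range]])
  note estimator_conv_in_prob[where rho = rho and rho_theta = rho_theta and X = X and t = t,
      OF M_prob xs_indep xs_distr rho_theta_pushforward[OF t_range] this
      borel_measurable_space_slice[where f = rho, OF rho_diff[OF t_range] t_range]
      borel_measurable_space_slice[where f = rho_theta, OF rho_theta_diff[OF t_range] t_range]
      rho_t_pos rt_pos Z C w]
  then show ?thesis using F_int by blast
qed

end
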